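(* Let $\Lambda\subset I_N$ and let $k$ be a time level. For every $\phi\in V^k(\Lambda)^d$ and $\psi\in V^k(\Lambda)$, $$(\psi,\nabla_h\cdot\phi)_\Lambda=-(\nabla_h\psi,\phi)_\Lambda,\qquad -(\psi,\Delta_h\psi)_\Lambda=|\psi|_{1,k,\Lambda}^2,$$ where for $i\in\Lambda$: $(\nabla_h\cdot\phi)_i=\sum_{j\in\Lambda}V_j(\phi_j+\phi_i)\cdot\nabla w_h(|x^k_i-x^k_j|)$, $(\nabla_h\psi)_i=\sum_{j\in\Lambda}V_j(\psi_j-\psi_i)\nabla w_h(|x^k_i-x^k_j|)$, and $(\Delta_h\psi)_i=2\sum_{j\in\Lambda\setminus\{i\}}V_j\frac{\psi_i-\psi_j}{|x^k_i-x^k_j|}\frac{x^k_i-x^k_j}{|x^k_i-x^k_j|}\cdot\nabla w_h(|x^k_i-x^k_j|)$.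
   Context: Let $d\in\{2,3\}$. Reference weight function $w\in C^2([0,\infty))$ with some $r_0>0$: $w>0$ on $(0,r_0)$, $w=0$ on $[r_0,\infty)$, $\dot w<0$ on $(0,r_0)$, $\dot w(0)=0$, $\dot w=0$ on $[r_0,\infty)$, $\int_{\mathbb{R}^d}w(|x|)dx=1$. For $h>0$, $w_h(r)=h^{-d}w(r/h)$ with derivative $\dot w_h$; for $x\ne y$, $\nabla w_h(|x-y|)=\dot w_h(|x-y|)\frac{x-y}{|x-y|}$, and $\nabla w_h(0):=0$. $N\in\mathbb{N}$, $I_N=\{1,\dots,N\}$, particle volumes $V_1,\dots,V_N>0$, pairwise distinct particle positions $x^k_1,\dots,x^k_N\in\mathbb{R}^d$ at level $k$. $V^k(\Lambda)$ is the space of real functions on $\{x^k_i\}_{i\in\Lambda}$ (values $\phi_i$), $V^k(\Lambda)^m$ the $\mathbb{R}^m$-valued ones. Discrete inner product $(\phi,\varphi)_\Lambda=\sum_{i\in\Lambda}V_i\,\phi_i\cdot\varphi_i$; discrete semi-norm $|\psi|_{1,k,\Lambda}=\big(\sum_{i\in\Lambda}V_i\sum_{j\in\Lambda\setminus\{i\}}V_j\frac{|\psi_i-\psi_j|^2}{|x^k_i-x^k_j|}|\dot w_h(|x^k_i-x^k_j|)|\big)^{1/2}$. *)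

theory Defs
  imports "HOL-Analysis.Analysis"
begin

text \<open>Derivative of the scaled kernel w_h(r) = h^(-d) w(r/h), given the derivative dw of w.\<close>
definition dwh :: "nat \<Rightarrow> real \<Rightarrow> (real \<Rightarrow> real) \<Rightarrow> real \<Rightarrow> real" where
  "dwh d h dw r = dw (r / h) / h ^ (d + 1)"

text \<open>Gradient of w_h(|x - y|), set to 0 for x = y.\<close>
definition gradwh :: "real \<Rightarrow> (real \<Rightarrow> real) \<Rightarrow> real^'n \<Rightarrow> real^'n \<Rightarrow> real^'n" where
  "gradwh h dw x y = (if x = y then 0
     else dwh CARD('n) h dw (norm (x - y)) *\<^sub>R ((1 / norm (x - y)) *\<^sub>R (x - y)))"

definition ip_scal :: "nat set \<Rightarrow> (nat \<Rightarrow> real) \<Rightarrow> (nat \<Rightarrow> real) \<Rightarrow> (nat \<Rightarrow> real) \<Rightarrow> real" where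
  "ip_scal \<Lambda> V \<phi> \<psi> = (\<Sum>i\<in>\<Lambda>. V i * (\<phi> i * \<psi> i))"

definition ip_vec :: "nat set \<Rightarrow> (nat \<Rightarrow> real) \<Rightarrow> (nat \<Rightarrow> real^'n) \<Rightarrow> (nat \<Rightarrow> real^'n) \<Rightarrow> real" where
  "ip_vec \<Lambda> V \<phi> \<psi> = (\<Sum>i\<in>\<Lambda>. V i * (\<phi> i \<bullet> \<psi> i))"

definition div_h :: "real \<Rightarrow> (real \<Rightarrow> real) \<Rightarrow> nat set \<Rightarrow> (nat \<Rightarrow> real)
    \<Rightarrow> (nat \<Rightarrow> real^'n) \<Rightarrow> (nat \<Rightarrow> real^'n) \<Rightarrow> nat \<Rightarrow> real" where
  "div_h h dw \<Lambda> V x \<phi> i = (\<Sum>j\<in>\<Lambda>. V j * ((\<phi> j + \<phi> i) \<bullet> gradwh h dw (x i) (x j)))"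

definition grad_h :: "real \<Rightarrow> (real \<Rightarrow> real) \<Rightarrow> nat set \<Rightarrow> (nat \<Rightarrow> real)
    \<Rightarrow> (nat \<Rightarrow> real^'n) \<Rightarrow> (nat \<Rightarrow> real) \<Rightarrow> nat \<Rightarrow> real^'n" where
  "grad_h h dw \<Lambda> V x \<psi> i = (\<Sum>j\<in>\<Lambda>. (V j * (\<psi> j - \<psi> i)) *\<^sub>R gradwh h dw (x i) (x j))"

definition lap_h :: "real \<Rightarrow> (real \<Rightarrow> real) \<Rightarrow> nat set \<Rightarrow> (nat \<Rightarrow> real)
    \<Rightarrow> (nat \<Rightarrow> real^'n) \<Rightarrow> (nat \<Rightarrow> real) \<Rightarrow> nat \<Rightarrow> real" where
  "lap_h h dw \<Lambda> V x \<psi> i = 2 * (\<Sum>j\<in>\<Lambda> - {i}. V j * ((\<psi> i - \<psi> j) / norm (x i - x j))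
       * (((1 / norm (x i - x j)) *\<^sub>R (x i - x j)) \<bullet> gradwh h dw (x i) (x j)))"

definition semi1 :: "real \<Rightarrow> (real \<Rightarrow> real) \<Rightarrow> nat set \<Rightarrow> (nat \<Rightarrow> real)
    \<Rightarrow> (nat \<Rightarrow> real^'n) \<Rightarrow> (nat \<Rightarrow> real) \<Rightarrow> real" where
  "semi1 h dw \<Lambda> V x \<psi> = sqrt (\<Sum>i\<in>\<Lambda>. V i * (\<Sum>j\<in>\<Lambda> - {i}. V j * ((\<psi> i - \<psi> j)\<^sup>2 / norm (x i - x j))
       * \<bar>dwh CARD('n) h dw (norm (x i - x j))\<bar>))"

end

theory Submission
  imports Defs
begin

text \<open>Both identities are discrete summations by parts. The kernel
  \<open>\<nabla>w\<^sub>h(|x\<^sub>i - x\<^sub>j|)\<close> is antisymmetric in \<open>i, j\<close>, so exchanging the summation indices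
  turns the divergence pairing into minus the gradient pairing. For the Laplacian,
  \<open>\<nabla>w\<^sub>h\<close> projected on the unit vector \<open>(x\<^sub>i - x\<^sub>j)/|x\<^sub>i - x\<^sub>j|\<close> is \<open>w\<^sub>h'(|x\<^sub>i - x\<^sub>j|)\<close>, which gives
  symmetric weights, and symmetrising \<open>\<psi>\<^sub>i(\<psi>\<^sub>i - \<psi>\<^sub>j)\<close> yields \<open>(\<psi>\<^sub>i - \<psi>\<^sub>j)\<^sup>2/2\<close>;
  since \<open>w' \<le> 0\<close> the weights are \<open>-|w\<^sub>h'|\<close>. Nothing beyond \<open>w' \<le> 0\<close> and nonnegative
  volumes is needed; where two positions coincide all terms vanish by \<open>x / 0 = 0\<close>.\<close>

lemma double_sum_antisym_eq_0:
  fixes f :: "'b \<Rightarrow> 'b \<Rightarrow> 'a :: linordered_ab_group_add"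
  assumes "\<And>i j. i \<in> A \<Longrightarrow> j \<in> A \<Longrightarrow> f j i = - f i j"
  shows "(\<Sum>i\<in>A. \<Sum>j\<in>A. f i j) = 0"
proof -
  have "(\<Sum>i\<in>A. \<Sum>j\<in>A. f i j) = (\<Sum>j\<in>A. \<Sum>i\<in>A. f i j)"
    by (rule sum.swap)
  also have "\<dots> = (\<Sum>j\<in>A. \<Sum>i\<in>A. - f j i)"
    by (intro sum.cong refl assms)
  also have "\<dots> = - (\<Sum>i\<in>A. \<Sum>j\<in>A. f i j)"
    by (simp add: sum_negf)
  finally show ?thesis
    by (simp only: equal_neg_zero)
qed

lemma double_sum_symmetric_weight:
  assumes "\<And>i j. a j i = a i j"
  shows "2 * (\<Sum>i\<in>A. \<Sum>j\<in>A. a i j * (u i * (u i - u j)))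
       = (\<Sum>i\<in>A. \<Sum>j\<in>A. a i j * (u i - u j)\<^sup>2 :: real)"
proof -
  have "2 * (\<Sum>i\<in>A. \<Sum>j\<in>A. a i j * (u i * (u i - u j))) - (\<Sum>i\<in>A. \<Sum>j\<in>A. a i j * (u i - u j)\<^sup>2)
      = (\<Sum>i\<in>A. \<Sum>j\<in>A. 2 * (a i j * (u i * (u i - u j))) - a i j * (u i - u j)\<^sup>2)"
    by (simp add: sum_distrib_left sum_subtractf)
  also have "\<dots> = (\<Sum>i\<in>A. \<Sum>j\<in>A. a i j * ((u i)\<^sup>2 - (u j)\<^sup>2))"
    by (intro sum.cong refl) (simp add: power2_eq_square algebra_simps)
  also have "\<dots> = 0"
    using assms by (intro double_sum_antisym_eq_0) (simp add: algebra_simps)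
  finally show ?thesis
    by simp
qed

lemma gradwh_swap: "gradwh h dw y x = - gradwh h dw x y"
  unfolding gradwh_def by (auto simp: norm_minus_commute scaleR_right_diff_distrib)

lemma inner_unit_gradwh:
  fixes x y :: "real^'n"
  assumes "x \<noteq> y"
  shows "((1 / norm (x - y)) *\<^sub>R (x - y)) \<bullet> gradwh h dw x y = dwh CARD('n) h dw (norm (x - y))"
  using assms by (simp add: gradwh_def inner_commute dot_square_norm power2_eq_square)

lemma dwh_nonpos:
  assumes "h > 0" and "\<And>s. s > 0 \<Longrightarrow> dw s \<le> 0" and "r > 0"
  shows "dwh d h dw r \<le> 0"
  using assms by (simp add: dwh_def divide_nonpos_pos)

lemma ip_scal_div_h:
  "ip_scal \<Lambda> V \<psi> (div_h h dw \<Lambda> V x \<phi>) = - ip_vec \<Lambda> V (grad_h h dw \<Lambda> V x \<psi>) \<phi>"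
proof -
  let ?G = "\<lambda>i j. gradwh h dw (x i) (x j)"
  have div: "ip_scal \<Lambda> V \<psi> (div_h h dw \<Lambda> V x \<phi>)
      = (\<Sum>i\<in>\<Lambda>. \<Sum>j\<in>\<Lambda>. V i * V j * (\<psi> i * (\<phi> j \<bullet> ?G i j) + \<psi> i * (\<phi> i \<bullet> ?G i j)))"
    unfolding ip_scal_def div_h_def
    by (simp add: sum_distrib_left inner_add_left algebra_simps)
  have grad: "ip_vec \<Lambda> V (grad_h h dw \<Lambda> V x \<psi>) \<phi>
      = (\<Sum>i\<in>\<Lambda>. \<Sum>j\<in>\<Lambda>. V i * V j * (\<psi> j * (\<phi> i \<bullet> ?G i j) - \<psi> i * (\<phi> i \<bullet> ?G i j)))"
    unfolding ip_vec_def grad_h_def inner_sum_left inner_scaleR_left sum_distrib_left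
    by (simp add: inner_commute algebra_simps)
  have "ip_scal \<Lambda> V \<psi> (div_h h dw \<Lambda> V x \<phi>) + ip_vec \<Lambda> V (grad_h h dw \<Lambda> V x \<psi>) \<phi>
      = (\<Sum>i\<in>\<Lambda>. \<Sum>j\<in>\<Lambda>. V i * V j * (\<psi> i * (\<phi> j \<bullet> ?G i j) + \<psi> j * (\<phi> i \<bullet> ?G i j)))"
    unfolding div grad sum.distrib[symmetric] by (intro sum.cong refl) (simp add: algebra_simps)
  also have "\<dots> = 0"
  proof (intro double_sum_antisym_eq_0)
    fix i j
    have "?G j i = - ?G i j"
      by (rule gradwh_swap)
    then show "V j * V i * (\<psi> j * (\<phi> i \<bullet> ?G j i) + \<psi> i * (\<phi> j \<bullet> ?G j i))
        = - (V i * V j * (\<psi> i * (\<phi> j \<bullet> ?G i j) + \<psi> j * (\<phi> i \<bullet> ?G i j)))"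
      by (simp add: algebra_simps)
  qed
  finally show ?thesis
    by (simp add: eq_neg_iff_add_eq_0)
qed

lemma lap_h_eq:
  fixes x :: "nat \<Rightarrow> real^'n"
  assumes "finite \<Lambda>"
  shows "lap_h h dw \<Lambda> V x \<psi> i = 2 * (\<Sum>j\<in>\<Lambda>.
           V j * dwh CARD('n) h dw (norm (x i - x j)) / norm (x i - x j) * (\<psi> i - \<psi> j))"
proof -
  have "V j * ((\<psi> i - \<psi> j) / norm (x i - x j))
        * (((1 / norm (x i - x j)) *\<^sub>R (x i - x j)) \<bullet> gradwh h dw (x i) (x j))
      = V j * dwh CARD('n) h dw (norm (x i - x j)) / norm (x i - x j) * (\<psi> i - \<psi> j)" for j
  proof (cases "x i = x j")
    case False
    then show ?thesis
      by (subst inner_unit_gradwh) simp_all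
  qed simp
  then show ?thesis
    using assms by (simp add: lap_h_def sum_diff1)
qed

lemma semi1_sq_eq:
  fixes x :: "nat \<Rightarrow> real^'n"
  assumes "finite \<Lambda>" and "\<And>i. i \<in> \<Lambda> \<Longrightarrow> V i \<ge> 0"
    and "\<And>r. r > 0 \<Longrightarrow> dwh CARD('n) h dw r \<le> 0"
  shows "(semi1 h dw \<Lambda> V x \<psi>)\<^sup>2 = - (\<Sum>i\<in>\<Lambda>. \<Sum>j\<in>\<Lambda>.
           V i * V j * dwh CARD('n) h dw (norm (x i - x j)) / norm (x i - x j) * (\<psi> i - \<psi> j)\<^sup>2)"
proof -
  let ?d = "\<lambda>i j. dwh CARD('n) h dw (norm (x i - x j))"
  let ?S = "\<Sum>i\<in>\<Lambda>. V i * (\<Sum>j\<in>\<Lambda> - {i}. V j * ((\<psi> i - \<psi> j)\<^sup>2 / norm (x i - x j)) * \<bar>?d i j\<bar>)"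
  have "0 \<le> ?S"
    using assms(2) by (intro sum_nonneg mult_nonneg_nonneg) auto
  moreover have "V i * (V j * ((\<psi> i - \<psi> j)\<^sup>2 / norm (x i - x j)) * \<bar>?d i j\<bar>)
      = - (V i * V j * ?d i j / norm (x i - x j) * (\<psi> i - \<psi> j)\<^sup>2)" for i j
    using assms(3)[of "norm (x i - x j)"] by (cases "x i = x j") auto
  ultimately show ?thesis
    using assms(1) by (simp add: semi1_def sum_distrib_left sum_diff1 sum_negf)
qed

lemma ip_scal_lap_h:
  fixes x :: "nat \<Rightarrow> real^'n"
  assumes "finite \<Lambda>" and "\<And>i. i \<in> \<Lambda> \<Longrightarrow> V i \<ge> 0"
    and "\<And>r. r > 0 \<Longrightarrow> dwh CARD('n) h dw r \<le> 0"
  shows "- ip_scal \<Lambda> V \<psi> (lap_h h dw \<Lambda> V x \<psi>) = (semi1 h dw \<Lambda> V x \<psi>)\<^sup>2"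
proof -
  define a where "a i j = V i * V j * dwh CARD('n) h dw (norm (x i - x j)) / norm (x i - x j)" for i j
  have "ip_scal \<Lambda> V \<psi> (lap_h h dw \<Lambda> V x \<psi>) = 2 * (\<Sum>i\<in>\<Lambda>. \<Sum>j\<in>\<Lambda>. a i j * (\<psi> i * (\<psi> i - \<psi> j)))"
    using assms(1) by (simp add: ip_scal_def lap_h_eq a_def sum_distrib_left mult_ac)
  also have "\<dots> = (\<Sum>i\<in>\<Lambda>. \<Sum>j\<in>\<Lambda>. a i j * (\<psi> i - \<psi> j)\<^sup>2)"
    by (rule double_sum_symmetric_weight) (simp add: a_def norm_minus_commute mult.commute)
  finally show ?thesis
    using semi1_sq_eq[OF assms] by (simp add: a_def)
qed

theorem lemma3:
  fixes w dw :: "real \<Rightarrow> real" and r0 h :: real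
    and N k :: nat and V :: "nat \<Rightarrow> real" and X :: "nat \<Rightarrow> nat \<Rightarrow> real^'n"
    and \<Lambda> :: "nat set" and \<phi> :: "nat \<Rightarrow> real^'n" and \<psi> :: "nat \<Rightarrow> real"
  assumes dim: "CARD('n) = 2 \<or> CARD('n) = 3"
    and w_deriv: "\<forall>r\<ge>0. (w has_real_derivative dw r) (at r within {0..})"
    and w_C2: "\<exists>ddw. (\<forall>r\<ge>0. (dw has_real_derivative ddw r) (at r within {0..}))
                    \<and> continuous_on {0..} ddw"
    and r0_pos: "r0 > 0"
    and w_pos: "\<forall>r. 0 < r \<and> r < r0 \<longrightarrow> w r > 0"
    and w_zero: "\<forall>r\<ge>r0. w r = 0"
    and dw_neg: "\<forall>r. 0 < r \<and> r < r0 \<longrightarrow> dw r < 0"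
    and dw_0: "dw 0 = 0"
    and dw_zero: "\<forall>r\<ge>r0. dw r = 0"
    and w_int: "((\<lambda>x::real^'n. w (norm x)) has_integral 1) UNIV"
    and h_pos: "h > 0"
    and V_pos: "\<forall>i\<in>{1..N}. V i > 0"
    and distinct: "inj_on (X k) {1..N}"
    and Lam: "\<Lambda> \<subseteq> {1..N}"
  shows "ip_scal \<Lambda> V \<psi> (div_h h dw \<Lambda> V (X k) \<phi>)
           = - ip_vec \<Lambda> V (grad_h h dw \<Lambda> V (X k) \<psi>) \<phi>
       \<and> - ip_scal \<Lambda> V \<psi> (lap_h h dw \<Lambda> V (X k) \<psi>) = (semi1 h dw \<Lambda> V (X k) \<psi>)\<^sup>2"
proof
  show "ip_scal \<Lambda> V \<psi> (div_h h dw \<Lambda> V (X k) \<phi>) = - ip_vec \<Lambda> V (grad_h h dw \<Lambda> V (X k) \<psi>) \<phi>"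
    by (rule ip_scal_div_h)
  have "finite \<Lambda>"
    using Lam finite_subset by blast
  moreover have "V i \<ge> 0" if "i \<in> \<Lambda>" for i
    using V_pos Lam that by (auto intro: less_imp_le)
  moreover have "dw s \<le> 0" if "s > 0" for s
    using dw_neg dw_zero that by (cases "s < r0") (auto intro: less_imp_le)
  then have "dwh CARD('n) h dw r \<le> 0" if "r > 0" for r
    using dwh_nonpos h_pos that by blast
  ultimately show "- ip_scal \<Lambda> V \<psi> (lap_h h dw \<Lambda> V (X k) \<psi>) = (semi1 h dw \<Lambda> V (X k) \<psi>)\<^sup>2"
    by (rule ip_scal_lap_h)
qed

end
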